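(* Let $n\ge 3$ be an integer, let $\Omega\subset\mathbb{R}^2$ be open, and let $\Lambda>0$ and $a_0,\dots,a_n$ be smooth real functions of $(x,y)\in\Omega$. Put $H=\frac{p_1^2+p_2^2}{2\Lambda}$ and $F=\sum_{i=0}^n a_i(x,y)\,p_1^{\,n-i}p_2^{\,i}$, and assume $\{H,F\}=0$ identically in $(x,y,p_1,p_2)$. Assume moreover that there are real constants $c_1,c_2$ with $$a_{n-1}=c_1+\sum_{j\ge 0,\ 2j\le n-3}(-1)^j a_{n-3-2j},\qquad a_n=c_2+\sum_{j\ge 0,\ 2j\le n-2}(-1)^j a_{n-2-2j}.$$ (i) If $n=2k$ is even, set $S_e=\sum_{j=0}^{k-1}(-1)^j(n-2j)a_{2j}$ and $S_o=\sum_{j=0}^{k-2}(-1)^j(n-2-2j)a_{2j+1}$. Then $$\big[S_e\Lambda\big]_x+\big[(-S_o+(-1)^{k+1}(n-1)c_1)\Lambda\big]_y=0,\qquad \big[(S_o+(-1)^{k+1}c_1)\Lambda\big]_x+\big[(S_e+(-1)^{k+1}nc_2)\Lambda\big]_y=0 .$$ (ii) If $n=2k+1$ is odd, set $T_e=\sum_{j=0}^{k-1}(-1)^j(n-1-2j)a_{2j}$ and $T_o=\sum_{j=0}^{k-1}(-1)^j(n-1-2j)a_{2j+1}$. Then $$\big[(T_e+(-1)^{k}c_1)\Lambda\big]_x+\big[(-T_o+(-1)^{k}nc_2)\Lambda\big]_y=0,\qquad \big[T_o\Lambda\big]_x+\big[(T_e+(-1)^{k+1}(n-1)c_1)\Lambda\big]_y=0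 .$$
   Context: The Poisson bracket is $\{H,F\}=\sum_{j=1}^2\left(\frac{\partial H}{\partial q^j}\frac{\partial F}{\partial p_j}-\frac{\partial H}{\partial p_j}\frac{\partial F}{\partial q^j}\right)$ with $(q^1,q^2)=(x,y)$. The condition $\{H,F\}=0$ says that $F$ is a first integral (polynomial of degree $n$ in momenta) of the geodesic flow of the metric $\Lambda(x,y)(dx^2+dy^2)$. Subscripts $x,y$ denote partial derivatives. *)

theory Defs
  imports "HOL-Analysis.Analysis"
begin

definition pdx :: "(real \<Rightarrow> real \<Rightarrow> real) \<Rightarrow> real \<Rightarrow> real \<Rightarrow> real" where
  "pdx f x y = deriv (\<lambda>t. f t y) x"

definition pdy :: "(real \<Rightarrow> real \<Rightarrow> real) \<Rightarrow> real \<Rightarrow> real \<Rightarrow> real" where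
  "pdy f x y = deriv (\<lambda>t. f x t) y"

fun iter_pd :: "bool list \<Rightarrow> (real \<Rightarrow> real \<Rightarrow> real) \<Rightarrow> real \<Rightarrow> real \<Rightarrow> real" where
  "iter_pd [] f = f"
| "iter_pd (b # bs) f = (if b then pdx else pdy) (iter_pd bs f)"

definition smooth_on :: "(real \<times> real) set \<Rightarrow> (real \<Rightarrow> real \<Rightarrow> real) \<Rightarrow> bool" where
  "smooth_on \<Omega> f \<longleftrightarrow> (\<forall>bs. (\<lambda>(x, y). iter_pd bs f x y) differentiable_on \<Omega>)"

definition poisson ::
  "(real \<Rightarrow> real \<Rightarrow> real \<Rightarrow> real \<Rightarrow> real) \<Rightarrow> (real \<Rightarrow> real \<Rightarrow> real \<Rightarrow> real \<Rightarrow> real)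
   \<Rightarrow> real \<Rightarrow> real \<Rightarrow> real \<Rightarrow> real \<Rightarrow> real" where
  "poisson H F x y p1 p2 =
     deriv (\<lambda>t. H t y p1 p2) x * deriv (\<lambda>t. F x y t p2) p1
   - deriv (\<lambda>t. H x y t p2) p1 * deriv (\<lambda>t. F t y p1 p2) x
   + deriv (\<lambda>t. H x t p1 p2) y * deriv (\<lambda>t. F x y p1 t) p2
   - deriv (\<lambda>t. H x y p1 t) p2 * deriv (\<lambda>t. F x t p1 p2) y"

end

theory Submission
  imports Defs "HOL-Computational_Algebra.Polynomial"
begin

(* Multiplying {H,F} = 0 by
   -2\<Lambda>^2 and putting (p1,p2) = (1,s) gives, for every real s, a polynomial identity whose
   first factor is 1 + s^2.  Differentiating it in s at the root s = i, and using Euler's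
   relation for the homogeneous form F, yields one complex identity at every point of \<Omega>
   between A = F(1,i), D = F_p1(1,i), their partial derivatives and the partials of \<Lambda>.

   The two linear constraints on a_(n-1), a_n say exactly that A is a constant \<alpha> + i \<beta> on
   \<Omega>.  Then the complex identity becomes  (\<Lambda> D)_x + i (\<Lambda> (D - n A))_y = 0,  whose real and
   imaginary parts are two divergence-free vector fields (the conservation law).
   Finally, splitting the sums defining Re/Im of A and D by the parity of the index
   identifies these vector fields with the ones in the statement, separately for even
   and odd n. *)


(* For coefficients c, the binary form F = \<Sum> c_m p1^(n-m) p2^m evaluated at (p1,p2) = (1,i),
   and its p1-derivative at the same point. *)
definition form_at_i :: "nat \<Rightarrow> (nat \<Rightarrow> real) \<Rightarrow> complex" where
  "form_at_i n c = (\<Sum>m = 0..n. complex_of_real (c m) * \<i> ^ m)"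

definition form_p1_at_i :: "nat \<Rightarrow> (nat \<Rightarrow> real) \<Rightarrow> complex" where
  "form_p1_at_i n c = form_at_i n (\<lambda>m. real (n - m) * c m)"

definition coeff_poly :: "nat \<Rightarrow> (nat \<Rightarrow> real) \<Rightarrow> complex poly" where
  "coeff_poly n c = (\<Sum>m = 0..n. monom (complex_of_real (c m)) m)"

lemma poly_coeff_poly: "poly (coeff_poly n c) z = (\<Sum>m = 0..n. complex_of_real (c m) * z ^ m)"
  by (simp add: coeff_poly_def poly_sum poly_monom)

lemma poly_pderiv_coeff_poly:
  "poly (pderiv (coeff_poly n c)) z = (\<Sum>m = 0..n. of_nat m * complex_of_real (c m) * z ^ (m - 1))"
  by (simp add: coeff_poly_def higher_pderiv_sum[where n=1, simplified] pderiv_monom poly_sum poly_monom)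

lemma euler_at_i:
  "\<i> * poly (pderiv (coeff_poly n c)) \<i> = of_nat n * form_at_i n c - form_p1_at_i n c"
proof -
  have "\<i> * poly (pderiv (coeff_poly n c)) \<i> = (\<Sum>m = 0..n. of_nat m * complex_of_real (c m) * \<i> ^ m)"
    unfolding poly_pderiv_coeff_poly sum_distrib_left
  proof (rule sum.cong)
    fix m show "\<i> * (of_nat m * complex_of_real (c m) * \<i> ^ (m - 1))
              = of_nat m * complex_of_real (c m) * \<i> ^ m"
      by (cases m) (simp_all add: algebra_simps)
  qed simp
  also have "\<dots> = (\<Sum>m = 0..n. of_nat n * (complex_of_real (c m) * \<i> ^ m)
                     - complex_of_real (real (n - m) * c m) * \<i> ^ m)"
    by (rule sum.cong) (auto simp: of_nat_diff algebra_simps)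
  finally show ?thesis
    by (simp add: form_p1_at_i_def form_at_i_def sum_subtractf sum_distrib_left)
qed

lemma poly_eq_0_if_real_roots:
  fixes P :: "complex poly"
  assumes "\<And>s. poly P (complex_of_real s) = 0"
  shows "P = 0"
proof (rule ccontr)
  assume "P \<noteq> 0"
  then have "finite {z. poly P z = 0}" by (rule poly_roots_finite)
  moreover have "range complex_of_real \<subseteq> {z. poly P z = 0}" using assms by auto
  ultimately have "finite (range complex_of_real)" by (rule finite_subset[rotated])
  then show False
    using finite_imageD[OF _ inj_of_real] infinite_UNIV_char_0[where 'a=real] by blast
qed

(* The algebraic heart of the argument: the polynomial identity in s obtained from the
   bracket vanishes identically, so its derivative at the root s = i of 1 + s^2 gives a
   complex relation between the values at (1,i) of F, F_p1 and of their x- and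
   y-derivatives (coefficients ax and ay). *)
lemma bracket_identity_at_i:
  fixes a ax ay :: "nat \<Rightarrow> real" and L Lx Ly :: real and n :: nat
  assumes R: "\<And>s. (1 + s\<^sup>2) * (Lx * (\<Sum>m = 0..n. real (n - m) * a m * s ^ m)
                               + Ly * (\<Sum>m = 0..n. a m * (real m * s ^ (m - 1))))
                 + 2 * L * ((\<Sum>m = 0..n. ax m * s ^ m) + s * (\<Sum>m = 0..n. ay m * s ^ m)) = 0"
  shows "of_real Lx * form_p1_at_i n a
       + \<i> * of_real Ly * (form_p1_at_i n a - of_nat n * form_at_i n a)
       + of_real L * (form_p1_at_i n ax - of_nat n * form_at_i n ax)
       + \<i> * of_real L * (form_p1_at_i n ay - of_nat n * form_at_i n ay)
       - \<i> * of_real L * form_at_i n ay = 0"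
proof -
  define P where "P = [:1, 0, 1:] * (smult (of_real Lx) (coeff_poly n (\<lambda>m. real (n - m) * a m))
                                     + smult (of_real Ly) (pderiv (coeff_poly n a)))
                     + smult (of_real (2 * L)) (coeff_poly n ax + [:0, 1:] * coeff_poly n ay)"
  have "poly P (of_real s) = of_real (
          (1 + s\<^sup>2) * (Lx * (\<Sum>m = 0..n. real (n - m) * a m * s ^ m)
                     + Ly * (\<Sum>m = 0..n. a m * (real m * s ^ (m - 1))))
          + 2 * L * ((\<Sum>m = 0..n. ax m * s ^ m) + s * (\<Sum>m = 0..n. ay m * s ^ m)))" for s
    by (simp add: P_def poly_coeff_poly poly_pderiv_coeff_poly algebra_simps power2_eq_square)
  then have "P = 0" by (intro poly_eq_0_if_real_roots) (simp only: R of_real_0)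
  then have "poly (pderiv P) \<i> = 0" by simp
  then have E: "2 * \<i> * (of_real Lx * poly (coeff_poly n (\<lambda>m. real (n - m) * a m)) \<i>
                    + of_real Ly * poly (pderiv (coeff_poly n a)) \<i>)
              + 2 * of_real L * (poly (pderiv (coeff_poly n ax)) \<i> + poly (coeff_poly n ay) \<i>
                             + \<i> * poly (pderiv (coeff_poly n ay)) \<i>) = 0"
    by (simp add: P_def pderiv_mult pderiv_add pderiv_smult pderiv_pCons algebra_simps)
  have poly_at_i: "poly (coeff_poly n c) \<i> = form_at_i n c" for c
    by (simp add: poly_coeff_poly form_at_i_def)
  have pderiv_at_i:
    "poly (pderiv (coeff_poly n c)) \<i> = - \<i> * (of_nat n * form_at_i n c - form_p1_at_i n c)" for c
    using arg_cong[OF euler_at_i[of n c], of "\<lambda>z. - \<i> * z"] by (simp add: mult.assoc[symmetric])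
  have "- (\<i> / 2) * (2 * \<i> * (of_real Lx * form_p1_at_i n a
                    + of_real Ly * (- \<i> * (of_nat n * form_at_i n a - form_p1_at_i n a)))
              + 2 * of_real L * (- \<i> * (of_nat n * form_at_i n ax - form_p1_at_i n ax) + form_at_i n ay
                 + \<i> * (- \<i> * (of_nat n * form_at_i n ay - form_p1_at_i n ay)))) = 0"
    using E unfolding poly_at_i pderiv_at_i form_p1_at_i_def[symmetric] by simp
  then show ?thesis by (simp add: algebra_simps)
qed

(* The bracket {H,F} at (p1,p2) = (1,s), multiplied by -2\<Lambda>^2, is the polynomial identity
   used above. *)
lemma bracket_on_line:
  fixes a :: "nat \<Rightarrow> real \<Rightarrow> real \<Rightarrow> real" and ax ay :: "nat \<Rightarrow> real"
  assumes L: "\<Lambda> x y \<noteq> 0"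
    and dLx: "((\<lambda>t. \<Lambda> t y) has_real_derivative Lx) (at x)"
    and dLy: "((\<lambda>t. \<Lambda> x t) has_real_derivative Ly) (at y)"
    and dax: "\<And>m. m \<le> n \<Longrightarrow> ((\<lambda>t. a m t y) has_real_derivative ax m) (at x)"
    and day: "\<And>m. m \<le> n \<Longrightarrow> ((\<lambda>t. a m x t) has_real_derivative ay m) (at y)"
    and PB: "poisson (\<lambda>x y p1 p2. (p1\<^sup>2 + p2\<^sup>2) / (2 * \<Lambda> x y))
                     (\<lambda>x y p1 p2. \<Sum>i = 0..n. a i x y * p1 ^ (n - i) * p2 ^ i) x y 1 s = 0"
  shows "(1 + s\<^sup>2) * (Lx * (\<Sum>m = 0..n. real (n - m) * a m x y * s ^ m)
                     + Ly * (\<Sum>m = 0..n. a m x y * (real m * s ^ (m - 1))))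
         + 2 * \<Lambda> x y * ((\<Sum>m = 0..n. ax m * s ^ m) + s * (\<Sum>m = 0..n. ay m * s ^ m)) = 0"
proof -
  define l where "l = \<Lambda> x y"
  have l: "l \<noteq> 0" using L by (simp add: l_def)
  have H_x: "((\<lambda>t. (1\<^sup>2 + s\<^sup>2) / (2 * \<Lambda> t y))
               has_real_derivative - (1 + s\<^sup>2) * Lx / (2 * l\<^sup>2)) (at x)"
    by (rule derivative_eq_intros refl dLx
        | use l in \<open>simp add: l_def field_simps power2_eq_square\<close>)+
  have H_y: "((\<lambda>t. (1\<^sup>2 + s\<^sup>2) / (2 * \<Lambda> x t))
               has_real_derivative - (1 + s\<^sup>2) * Ly / (2 * l\<^sup>2)) (at y)"
    by (rule derivative_eq_intros refl dLy
        | use l in \<open>simp add: l_def field_simps power2_eq_square\<close>)+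
  have H_p1: "((\<lambda>t. (t\<^sup>2 + s\<^sup>2) / (2 * \<Lambda> x y)) has_real_derivative 1 / l) (at 1)"
    by (rule derivative_eq_intros refl | use l in \<open>simp add: l_def field_simps\<close>)+
  have H_p2: "((\<lambda>t. (1\<^sup>2 + t\<^sup>2) / (2 * \<Lambda> x y)) has_real_derivative s / l) (at s)"
    by (rule derivative_eq_intros refl | use l in \<open>simp add: l_def field_simps\<close>)+
  have F_x: "((\<lambda>t. \<Sum>i = 0..n. a i t y * 1 ^ (n - i) * s ^ i)
               has_real_derivative (\<Sum>m = 0..n. ax m * s ^ m)) (at x)"
    by (rule DERIV_sum) (auto intro!: derivative_eq_intros dax)
  have F_y: "((\<lambda>t. \<Sum>i = 0..n. a i x t * 1 ^ (n - i) * s ^ i)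
               has_real_derivative (\<Sum>m = 0..n. ay m * s ^ m)) (at y)"
    by (rule DERIV_sum) (auto intro!: derivative_eq_intros day)
  have F_p1: "((\<lambda>t. \<Sum>i = 0..n. a i x y * t ^ (n - i) * s ^ i)
               has_real_derivative (\<Sum>m = 0..n. real (n - m) * a m x y * s ^ m)) (at 1)"
    by (rule DERIV_sum) (auto intro!: derivative_eq_intros)
  have F_p2: "((\<lambda>t. \<Sum>i = 0..n. a i x y * 1 ^ (n - i) * t ^ i)
               has_real_derivative (\<Sum>m = 0..n. a m x y * (real m * s ^ (m - 1)))) (at s)"
    by (rule DERIV_sum) (auto intro!: derivative_eq_intros)
  have "- (1 + s\<^sup>2) * Lx / (2 * l\<^sup>2) * (\<Sum>m = 0..n. real (n - m) * a m x y * s ^ m)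
        - 1 / l * (\<Sum>m = 0..n. ax m * s ^ m)
        + - (1 + s\<^sup>2) * Ly / (2 * l\<^sup>2) * (\<Sum>m = 0..n. a m x y * (real m * s ^ (m - 1)))
        - s / l * (\<Sum>m = 0..n. ay m * s ^ m) = 0"
    using PB unfolding poisson_def
    by (simp only: H_x[THEN DERIV_imp_deriv] H_y[THEN DERIV_imp_deriv] H_p1[THEN DERIV_imp_deriv]
        H_p2[THEN DERIV_imp_deriv] F_x[THEN DERIV_imp_deriv] F_y[THEN DERIV_imp_deriv]
        F_p1[THEN DERIV_imp_deriv] F_p2[THEN DERIV_imp_deriv])
  moreover have "(1 + s\<^sup>2) * (Lx * A + Ly * C) + 2 * l * (B + s * D)
      = - 2 * l\<^sup>2 * (- (1 + s\<^sup>2) * Lx / (2 * l\<^sup>2) * A - 1 / l * B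
                       + - (1 + s\<^sup>2) * Ly / (2 * l\<^sup>2) * C - s / l * D)" for A B C D
    using l by (simp add: field_simps power2_eq_square)
  ultimately show ?thesis by (simp add: l_def)
qed

lemma smooth_on_partial_derivatives:
  assumes "smooth_on \<Omega> f" "open \<Omega>" "(x, y) \<in> \<Omega>"
  shows "((\<lambda>t. f t y) has_real_derivative pdx f x y) (at x)"
    and "((\<lambda>t. f x t) has_real_derivative pdy f x y) (at y)"
proof -
  have "(\<lambda>(x, y). iter_pd [] f x y) differentiable_on \<Omega>"
    using assms(1) unfolding smooth_on_def by blast
  then have "(\<lambda>(x, y). f x y) differentiable (at (x, y) within \<Omega>)"
    using assms(3) by (simp add: differentiable_on_def)
  then have f: "(\<lambda>(x, y). f x y) differentiable (at (x, y))"
    using at_within_open[OF assms(3,2)] by simp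
  have "((\<lambda>(x, y). f x y) \<circ> (\<lambda>t. (t, y))) differentiable (at x)"
    using f by (intro differentiable_chain_at) (auto intro!: derivative_intros)
  then show "((\<lambda>t. f t y) has_real_derivative pdx f x y) (at x)"
    by (simp add: o_def pdx_def DERIV_deriv_iff_real_differentiable)
  have "((\<lambda>(x, y). f x y) \<circ> (\<lambda>t. (x, t))) differentiable (at y)"
    using f by (intro differentiable_chain_at) (auto intro!: derivative_intros)
  then show "((\<lambda>t. f x t) has_real_derivative pdy f x y) (at y)"
    by (simp add: o_def pdy_def DERIV_deriv_iff_real_differentiable)
qed

lemma pdx_eqI: "((\<lambda>t. f t y) has_real_derivative D) (at x) \<Longrightarrow> pdx f x y = D"
  unfolding pdx_def by (rule DERIV_imp_deriv)

lemma pdy_eqI: "((\<lambda>t. f x t) has_real_derivative D) (at y) \<Longrightarrow> pdy f x y = D"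
  unfolding pdy_def by (rule DERIV_imp_deriv)

lemma pd_cong_open:
  assumes "open \<Omega>" "(x, y) \<in> \<Omega>" "\<And>u v. (u, v) \<in> \<Omega> \<Longrightarrow> f u v = g u v"
  shows "pdx f x y = pdx g x y" and "pdy f x y = pdy g x y"
proof -
  have "eventually (\<lambda>t. t \<in> (\<lambda>t. (t, y)) -` \<Omega>) (nhds x)"
    by (intro eventually_nhds_in_open) (auto intro!: continuous_open_vimage continuous_intros assms(1,2))
  then have "eventually (\<lambda>t. f t y = g t y) (nhds x)"
    by eventually_elim (simp add: assms(3))
  then show "pdx f x y = pdx g x y"
    unfolding pdx_def by (rule deriv_cong_ev) simp
  have "eventually (\<lambda>t. t \<in> (\<lambda>t. (x, t)) -` \<Omega>) (nhds y)"
    by (intro eventually_nhds_in_open) (auto intro!: continuous_open_vimage continuous_intros assms(1,2))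
  then have "eventually (\<lambda>t. f x t = g x t) (nhds y)"
    by eventually_elim (simp add: assms(3))
  then show "pdy f x y = pdy g x y"
    unfolding pdy_def by (rule deriv_cong_ev) simp
qed

lemma pd_zero_if_constant:
  assumes "open \<Omega>" "(x, y) \<in> \<Omega>" "\<And>u v. (u, v) \<in> \<Omega> \<Longrightarrow> f u v = c"
  shows "((\<lambda>t. f t y) has_real_derivative D) (at x) \<Longrightarrow> D = 0"
    and "((\<lambda>t. f x t) has_real_derivative D) (at y) \<Longrightarrow> D = 0"
proof -
  have "pdx f x y = pdx (\<lambda>_ _. c) x y" "pdy f x y = pdy (\<lambda>_ _. c) x y"
    using pd_cong_open[OF assms] by auto
  then have "pdx f x y = 0" "pdy f x y = 0"
    by (simp_all add: pdx_def pdy_def)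
  then show "((\<lambda>t. f t y) has_real_derivative D) (at x) \<Longrightarrow> D = 0"
    and "((\<lambda>t. f x t) has_real_derivative D) (at y) \<Longrightarrow> D = 0"
    by (auto dest: pdx_eqI pdy_eqI)
qed

definition divergence ::
    "(real \<Rightarrow> real \<Rightarrow> real) \<Rightarrow> (real \<Rightarrow> real \<Rightarrow> real) \<Rightarrow> real \<Rightarrow> real \<Rightarrow> real" where
  "divergence P Q x y = pdx P x y + pdy Q x y"

lemma divergence_free_cong_open:
  assumes "open \<Omega>" "(x, y) \<in> \<Omega>" and "divergence P' Q' x y = 0"
    and "\<And>u v. (u, v) \<in> \<Omega> \<Longrightarrow> P u v = P' u v" "\<And>u v. (u, v) \<in> \<Omega> \<Longrightarrow> Q u v = Q' u v"
  shows "divergence P Q x y = 0"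
  using assms pd_cong_open[OF assms(1,2,4)] pd_cong_open[OF assms(1,2,5)] by (simp add: divergence_def)

lemma Re_form_at_i: "Re (form_at_i n c) = (\<Sum>m = 0..n. Re (\<i> ^ m) * c m)"
  and Im_form_at_i: "Im (form_at_i n c) = (\<Sum>m = 0..n. Im (\<i> ^ m) * c m)"
  by (simp_all add: form_at_i_def Re_sum Im_sum mult.commute)

lemma form_at_i_has_derivative:
  assumes "\<And>m. m \<le> n \<Longrightarrow> (g m has_real_derivative g' m) (at x)"
  shows "((\<lambda>t. Re (form_at_i n (\<lambda>m. g m t))) has_real_derivative Re (form_at_i n g')) (at x)"
    and "((\<lambda>t. Im (form_at_i n (\<lambda>m. g m t))) has_real_derivative Im (form_at_i n g')) (at x)"
  unfolding Re_form_at_i Im_form_at_i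
  by (auto intro!: DERIV_sum DERIV_cmult assms)

lemma form_p1_at_i_has_derivative:
  assumes "\<And>m. m \<le> n \<Longrightarrow> (g m has_real_derivative g' m) (at x)"
  shows "((\<lambda>t. Re (form_p1_at_i n (\<lambda>m. g m t))) has_real_derivative Re (form_p1_at_i n g')) (at x)"
    and "((\<lambda>t. Im (form_p1_at_i n (\<lambda>m. g m t))) has_real_derivative Im (form_p1_at_i n g')) (at x)"
  unfolding form_p1_at_i_def
  by (auto intro!: form_at_i_has_derivative DERIV_cmult assms)

lemma constant_form_derivatives:
  assumes op: "open \<Omega>" and xy: "(x, y) \<in> \<Omega>"
    and const: "\<forall>(u, v) \<in> \<Omega>. form_at_i n (\<lambda>m. a m u v) = A0"
    and dax: "\<And>m. m \<le> n \<Longrightarrow> ((\<lambda>t. a m t y) has_real_derivative ax m) (at x)"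
    and day: "\<And>m. m \<le> n \<Longrightarrow> ((\<lambda>t. a m x t) has_real_derivative ay m) (at y)"
  shows "form_at_i n ax = 0" and "form_at_i n ay = 0"
proof -
  have Re_const: "\<And>u v. (u, v) \<in> \<Omega> \<Longrightarrow> Re (form_at_i n (\<lambda>m. a m u v)) = Re A0"
    and Im_const: "\<And>u v. (u, v) \<in> \<Omega> \<Longrightarrow> Im (form_at_i n (\<lambda>m. a m u v)) = Im A0"
    using const by auto
  have "Re (form_at_i n ax) = 0"
    using Re_const
    by (intro pd_zero_if_constant(1)[OF op xy, where f="\<lambda>u v. Re (form_at_i n (\<lambda>m. a m u v))"])
       (auto intro!: form_at_i_has_derivative dax)
  moreover have "Im (form_at_i n ax) = 0"
    using Im_const
    by (intro pd_zero_if_constant(1)[OF op xy, where f="\<lambda>u v. Im (form_at_i n (\<lambda>m. a m u v))"])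
       (auto intro!: form_at_i_has_derivative dax)
  ultimately show "form_at_i n ax = 0" by (simp add: complex_eq_iff)
  have "Re (form_at_i n ay) = 0"
    using Re_const
    by (intro pd_zero_if_constant(2)[OF op xy, where f="\<lambda>u v. Re (form_at_i n (\<lambda>m. a m u v))"])
       (auto intro!: form_at_i_has_derivative day)
  moreover have "Im (form_at_i n ay) = 0"
    using Im_const
    by (intro pd_zero_if_constant(2)[OF op xy, where f="\<lambda>u v. Im (form_at_i n (\<lambda>m. a m u v))"])
       (auto intro!: form_at_i_has_derivative day)
  ultimately show "form_at_i n ay = 0" by (simp add: complex_eq_iff)
qed

(* The conservation law: if F(1,i) = \<alpha> + i \<beta> on \<Omega>, then with D = F_p1(1,i) the
   complex identity reads (\<Lambda> D)_x + i (\<Lambda> (D - n (\<alpha> + i \<beta>)))_y = 0; its real and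
   imaginary parts are two divergence-free vector fields. *)
lemma conservation_law:
  fixes \<Lambda> :: "real \<Rightarrow> real \<Rightarrow> real" and a :: "nat \<Rightarrow> real \<Rightarrow> real \<Rightarrow> real"
  assumes op: "open \<Omega>" and xy: "(x, y) \<in> \<Omega>"
    and Lpos: "\<forall>(x, y) \<in> \<Omega>. \<Lambda> x y > 0"
    and Lsm: "smooth_on \<Omega> \<Lambda>"
    and asm: "\<forall>i \<le> n. smooth_on \<Omega> (a i)"
    and PB: "\<forall>(x, y) \<in> \<Omega>. \<forall>p1 p2.
      poisson (\<lambda>x y p1 p2. (p1\<^sup>2 + p2\<^sup>2) / (2 * \<Lambda> x y))
              (\<lambda>x y p1 p2. \<Sum>i = 0..n. a i x y * p1 ^ (n - i) * p2 ^ i) x y p1 p2 = 0"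
    and const: "\<forall>(u, v) \<in> \<Omega>. form_at_i n (\<lambda>m. a m u v) = Complex \<alpha> \<beta>"
  shows "divergence (\<lambda>x y. Re (form_p1_at_i n (\<lambda>m. a m x y)) * \<Lambda> x y)
                    (\<lambda>x y. (real n * \<beta> - Im (form_p1_at_i n (\<lambda>m. a m x y))) * \<Lambda> x y) x y = 0"
    and "divergence (\<lambda>x y. Im (form_p1_at_i n (\<lambda>m. a m x y)) * \<Lambda> x y)
                    (\<lambda>x y. (Re (form_p1_at_i n (\<lambda>m. a m x y)) - real n * \<alpha>) * \<Lambda> x y) x y = 0"
proof -
  define D Dx Dy where "D = form_p1_at_i n (\<lambda>m. a m x y)"
    and "Dx = form_p1_at_i n (\<lambda>m. pdx (a m) x y)" and "Dy = form_p1_at_i n (\<lambda>m. pdy (a m) x y)"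
  note dL = smooth_on_partial_derivatives[OF Lsm op xy]
  note da = smooth_on_partial_derivatives[OF asm[rule_format] op xy]
  have vanish: "form_at_i n (\<lambda>m. pdx (a m) x y) = 0" "form_at_i n (\<lambda>m. pdy (a m) x y) = 0"
    using constant_form_derivatives[OF op xy const da] by auto
  have "\<Lambda> x y \<noteq> 0" using Lpos xy by auto
  then have "of_real (pdx \<Lambda> x y) * D
       + \<i> * of_real (pdy \<Lambda> x y) * (D - of_nat n * form_at_i n (\<lambda>m. a m x y))
       + of_real (\<Lambda> x y) * (Dx - of_nat n * form_at_i n (\<lambda>m. pdx (a m) x y))
       + \<i> * of_real (\<Lambda> x y) * (Dy - of_nat n * form_at_i n (\<lambda>m. pdy (a m) x y))
       - \<i> * of_real (\<Lambda> x y) * form_at_i n (\<lambda>m. pdy (a m) x y) = 0"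
    unfolding D_def Dx_def Dy_def
    using PB xy by (intro bracket_identity_at_i bracket_on_line dL da) auto
  moreover have "form_at_i n (\<lambda>m. a m x y) = Complex \<alpha> \<beta>" using const xy by auto
  ultimately have complex_law:
    "of_real (pdx \<Lambda> x y) * D + of_real (\<Lambda> x y) * Dx
     + \<i> * (of_real (pdy \<Lambda> x y) * (D - of_nat n * Complex \<alpha> \<beta>) + of_real (\<Lambda> x y) * Dy) = 0"
    by (simp add: vanish algebra_simps)
  have "pdx (\<lambda>x y. Re (form_p1_at_i n (\<lambda>m. a m x y)) * \<Lambda> x y) x y
        = Re Dx * \<Lambda> x y + pdx \<Lambda> x y * Re D"
    unfolding D_def Dx_def by (intro pdx_eqI DERIV_mult form_p1_at_i_has_derivative da dL)
  moreover have "pdy (\<lambda>x y. (real n * \<beta> - Im (form_p1_at_i n (\<lambda>m. a m x y))) * \<Lambda> x y) x y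
        = (0 - Im Dy) * \<Lambda> x y + pdy \<Lambda> x y * (real n * \<beta> - Im D)"
    unfolding D_def Dy_def
    by (intro pdy_eqI DERIV_mult DERIV_diff DERIV_const form_p1_at_i_has_derivative da dL)
  ultimately show "divergence (\<lambda>x y. Re (form_p1_at_i n (\<lambda>m. a m x y)) * \<Lambda> x y)
                    (\<lambda>x y. (real n * \<beta> - Im (form_p1_at_i n (\<lambda>m. a m x y))) * \<Lambda> x y) x y = 0"
    unfolding divergence_def using arg_cong[OF complex_law, of Re] by (simp add: algebra_simps)
  have "pdx (\<lambda>x y. Im (form_p1_at_i n (\<lambda>m. a m x y)) * \<Lambda> x y) x y
        = Im Dx * \<Lambda> x y + pdx \<Lambda> x y * Im D"
    unfolding D_def Dx_def by (intro pdx_eqI DERIV_mult form_p1_at_i_has_derivative da dL)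
  moreover have "pdy (\<lambda>x y. (Re (form_p1_at_i n (\<lambda>m. a m x y)) - real n * \<alpha>) * \<Lambda> x y) x y
        = (Re Dy - 0) * \<Lambda> x y + pdy \<Lambda> x y * (Re D - real n * \<alpha>)"
    unfolding D_def Dy_def
    by (intro pdy_eqI DERIV_mult DERIV_diff DERIV_const form_p1_at_i_has_derivative da dL)
  ultimately show "divergence (\<lambda>x y. Im (form_p1_at_i n (\<lambda>m. a m x y)) * \<Lambda> x y)
                    (\<lambda>x y. (Re (form_p1_at_i n (\<lambda>m. a m x y)) - real n * \<alpha>) * \<Lambda> x y) x y = 0"
    unfolding divergence_def using arg_cong[OF complex_law, of Im] by (simp add: algebra_simps)
qed

lemma i_power_even: "\<i> ^ (2 * j) = (-1 :: complex) ^ j"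
  by (simp add: power_mult)

lemma sum_powers_of_i_pairs:
  "(\<Sum>m<2 * N. complex_of_real (c m) * \<i> ^ m)
   = (\<Sum>j<N. complex_of_real ((-1) ^ j * c (2 * j)) + \<i> * complex_of_real ((-1) ^ j * c (2 * j + 1)))"
proof (induction N)
  case (Suc N)
  have "2 * Suc N = Suc (Suc (2 * N))" by simp
  then show ?case
    by (simp only: sum.lessThan_Suc Suc.IH[symmetric]) (simp add: i_power_even algebra_simps)
qed simp

lemma form_at_i_odd:
  assumes "n = 2 * k + 1"
  shows "Re (form_at_i n c) = (\<Sum>j<k + 1. (-1) ^ j * c (2 * j))"
    and "Im (form_at_i n c) = (\<Sum>j<k + 1. (-1) ^ j * c (2 * j + 1))"
proof -
  have "{0..n} = {..<2 * (k + 1)}" using assms by auto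
  then have "form_at_i n c = (\<Sum>j<k + 1. complex_of_real ((-1) ^ j * c (2 * j))
                                        + \<i> * complex_of_real ((-1) ^ j * c (2 * j + 1)))"
    unfolding form_at_i_def by (simp only: sum_powers_of_i_pairs)
  then show "Re (form_at_i n c) = (\<Sum>j<k + 1. (-1) ^ j * c (2 * j))"
    and "Im (form_at_i n c) = (\<Sum>j<k + 1. (-1) ^ j * c (2 * j + 1))"
    by (simp_all add: Re_sum Im_sum)
qed

lemma form_at_i_even:
  assumes "n = 2 * k"
  shows "Re (form_at_i n c) = (\<Sum>j<k + 1. (-1) ^ j * c (2 * j))"
    and "Im (form_at_i n c) = (\<Sum>j<k. (-1) ^ j * c (2 * j + 1))"
proof -
  have "{0..n} = {..<Suc (2 * k)}" using assms by auto
  then have "form_at_i n c = (\<Sum>j<k. complex_of_real ((-1) ^ j * c (2 * j))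
                                    + \<i> * complex_of_real ((-1) ^ j * c (2 * j + 1)))
                             + complex_of_real ((-1) ^ k * c (2 * k))"
    unfolding form_at_i_def by (simp add: sum_powers_of_i_pairs i_power_even)
  then show "Re (form_at_i n c) = (\<Sum>j<k + 1. (-1) ^ j * c (2 * j))"
    and "Im (form_at_i n c) = (\<Sum>j<k. (-1) ^ j * c (2 * j + 1))"
    by (simp_all add: Re_sum Im_sum)
qed

(* The same splitting for F_p1(1,i), written with the sums occurring in the statement; the
   weight n - m of the top even (resp. odd) index vanishes. *)
lemma form_p1_at_i_even:
  assumes n: "n = 2 * k" and k: "k \<ge> 2"
  shows "Re (form_p1_at_i n c) = (\<Sum>j = 0..k - 1. (-1) ^ j * real (n - 2 * j) * c (2 * j))"
    and "Im (form_p1_at_i n c)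
           = (\<Sum>j = 0..k - 2. (-1) ^ j * real (n - 2 - 2 * j) * c (2 * j + 1)) + Im (form_at_i n c)"
proof -
  from k have "k = Suc (Suc (k - 2))" by simp
  then obtain k' where k': "k = Suc (Suc k')" by blast
  have "Re (form_p1_at_i n c) = (\<Sum>j<k + 1. (-1) ^ j * (real (n - 2 * j) * c (2 * j)))"
    unfolding form_p1_at_i_def by (rule form_at_i_even(1)[OF n])
  also have "\<dots> = (\<Sum>j = 0..k - 1. (-1) ^ j * real (n - 2 * j) * c (2 * j))"
    using n k' by (simp add: atLeast0AtMost lessThan_Suc_atMost[symmetric] mult.assoc)
  finally show "Re (form_p1_at_i n c) = (\<Sum>j = 0..k - 1. (-1) ^ j * real (n - 2 * j) * c (2 * j))" .
  have "Im (form_p1_at_i n c) = (\<Sum>j<k. (-1) ^ j * (real (n - (2 * j + 1)) * c (2 * j + 1)))"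
    unfolding form_p1_at_i_def by (rule form_at_i_even(2)[OF n])
  also have "\<dots> = (\<Sum>j<k. (-1) ^ j * real (n - 2 - 2 * j) * c (2 * j + 1) + (-1) ^ j * c (2 * j + 1))"
    using n by (intro sum.cong) (auto simp: of_nat_diff algebra_simps)
  also have "\<dots> = (\<Sum>j<k. (-1) ^ j * real (n - 2 - 2 * j) * c (2 * j + 1)) + Im (form_at_i n c)"
    by (simp only: sum.distrib form_at_i_even(2)[OF n])
  also have "(\<Sum>j<k. (-1) ^ j * real (n - 2 - 2 * j) * c (2 * j + 1))
             = (\<Sum>j = 0..k - 2. (-1) ^ j * real (n - 2 - 2 * j) * c (2 * j + 1))"
    using n k' by (simp add: atLeast0AtMost lessThan_Suc_atMost[symmetric])
  finally show "Im (form_p1_at_i n c)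
           = (\<Sum>j = 0..k - 2. (-1) ^ j * real (n - 2 - 2 * j) * c (2 * j + 1)) + Im (form_at_i n c)" .
qed

lemma form_p1_at_i_odd:
  assumes n: "n = 2 * k + 1" and k: "k \<ge> 1"
  shows "Re (form_p1_at_i n c)
           = (\<Sum>j = 0..k - 1. (-1) ^ j * real (n - 1 - 2 * j) * c (2 * j)) + Re (form_at_i n c)"
    and "Im (form_p1_at_i n c) = (\<Sum>j = 0..k - 1. (-1) ^ j * real (n - 1 - 2 * j) * c (2 * j + 1))"
proof -
  obtain k' where k': "k = Suc k'" using k by (cases k) auto
  have "Re (form_p1_at_i n c) = (\<Sum>j<k + 1. (-1) ^ j * (real (n - 2 * j) * c (2 * j)))"
    unfolding form_p1_at_i_def by (rule form_at_i_odd(1)[OF n])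
  also have "\<dots> = (\<Sum>j<k + 1. (-1) ^ j * real (n - 1 - 2 * j) * c (2 * j) + (-1) ^ j * c (2 * j))"
    using n by (intro sum.cong) (auto simp: of_nat_diff algebra_simps)
  also have "\<dots> = (\<Sum>j<k + 1. (-1) ^ j * real (n - 1 - 2 * j) * c (2 * j)) + Re (form_at_i n c)"
    by (simp only: sum.distrib form_at_i_odd(1)[OF n])
  also have "(\<Sum>j<k + 1. (-1) ^ j * real (n - 1 - 2 * j) * c (2 * j))
             = (\<Sum>j = 0..k - 1. (-1) ^ j * real (n - 1 - 2 * j) * c (2 * j))"
    using n k' by (simp add: atLeast0AtMost lessThan_Suc_atMost[symmetric])
  finally show "Re (form_p1_at_i n c)
           = (\<Sum>j = 0..k - 1. (-1) ^ j * real (n - 1 - 2 * j) * c (2 * j)) + Re (form_at_i n c)" .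
  have "Im (form_p1_at_i n c) = (\<Sum>j<k + 1. (-1) ^ j * (real (n - (2 * j + 1)) * c (2 * j + 1)))"
    unfolding form_p1_at_i_def by (rule form_at_i_odd(2)[OF n])
  also have "\<dots> = (\<Sum>j = 0..k - 1. (-1) ^ j * real (n - 1 - 2 * j) * c (2 * j + 1))"
    using n k' by (simp add: atLeast0AtMost lessThan_Suc_atMost[symmetric] mult.assoc)
  finally show "Im (form_p1_at_i n c) = (\<Sum>j = 0..k - 1. (-1) ^ j * real (n - 1 - 2 * j) * c (2 * j + 1))" .
qed

lemma alternating_sum_recursion:
  fixes f :: "nat \<Rightarrow> real"
  assumes rec: "f N = c + (\<Sum>j<N. (-1) ^ j * f (N - 1 - j))"
  shows "(\<Sum>j<N + 1. (-1) ^ j * f j) = (-1) ^ N * c"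
proof -
  have reversed: "(\<Sum>j<N. (-1) ^ j * f (N - 1 - j)) = (\<Sum>j<N. (-1) ^ (N - 1 - j) * f j)"
  proof -
    have "(\<Sum>j<N. (-1) ^ j * f (N - 1 - j)) = (\<Sum>i<N. (\<lambda>j. (-1) ^ (N - 1 - j) * f j) (N - Suc i))"
    proof (rule sum.cong)
      fix i assume "i \<in> {..<N}"
      then have "N - 1 - (N - Suc i) = i" "N - Suc i = N - 1 - i" by auto
      then show "(-1) ^ i * f (N - 1 - i) = (\<lambda>j. (-1) ^ (N - 1 - j) * f j) (N - Suc i)" by (simp only:)
    qed simp
    also have "\<dots> = (\<Sum>j<N. (-1) ^ (N - 1 - j) * f j)" by (rule sum.nat_diff_reindex)
    finally show ?thesis .
  qed
  have sign: "(-1 :: real) ^ N * (-1) ^ (N - 1 - j) = - ((-1) ^ j)" if jN: "j < N" for j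
  proof -
    obtain d where "N = Suc (j + d)" using less_imp_Suc_add[OF jN] by blast
    then show ?thesis by (simp add: power_add)
  qed
  have "(-1) ^ N * f N = (-1) ^ N * c + (\<Sum>j<N. ((-1) ^ N * (-1) ^ (N - 1 - j)) * f j)"
    by (subst rec, simp only: reversed) (simp add: sum_distrib_left distrib_left mult.assoc)
  also have "(\<Sum>j<N. ((-1) ^ N * (-1) ^ (N - 1 - j)) * f j) = - (\<Sum>j<N. (-1) ^ j * f j)"
    unfolding sum_negf[symmetric] by (rule sum.cong) (use sign in auto)
  finally show ?thesis by simp
qed

lemma form_at_i_constant_even:
  fixes a :: "nat \<Rightarrow> real"
  assumes n: "n = 2 * k" and k: "k \<ge> 2"
    and C1: "a (n - 1) = c1 + (\<Sum>j \<in> {j. 2 * j \<le> n - 3}. (-1) ^ j * a (n - 3 - 2 * j))"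
    and C2: "a n = c2 + (\<Sum>j \<in> {j. 2 * j \<le> n - 2}. (-1) ^ j * a (n - 2 - 2 * j))"
  shows "form_at_i n a = Complex ((-1) ^ k * c2) ((-1) ^ (k + 1) * c1)"
proof (rule complex_eqI)
  have "{j. 2 * j \<le> n - 2} = {..<k}" using n k by auto
  moreover have "a (n - 2 - 2 * j) = a (2 * (k - 1 - j))" if "j < k" for j
    using n that by (intro arg_cong[where f=a]) linarith
  ultimately have "a (2 * k) = c2 + (\<Sum>j<k. (-1) ^ j * a (2 * (k - 1 - j)))"
    using C2 n by simp
  then have "(\<Sum>j<k + 1. (-1) ^ j * a (2 * j)) = (-1) ^ k * c2"
    by (rule alternating_sum_recursion[where f="\<lambda>j. a (2 * j)"])
  then show "Re (form_at_i n a) = Re (Complex ((-1) ^ k * c2) ((-1) ^ (k + 1) * c1))"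
    by (simp add: form_at_i_even(1)[OF n])
  have "a (2 * (k - 1) + 1) = a (n - 1)"
    using n k by (intro arg_cong[where f=a]) linarith
  also have "\<dots> = c1 + (\<Sum>j \<in> {j. 2 * j \<le> n - 3}. (-1) ^ j * a (n - 3 - 2 * j))"
    by (rule C1)
  also have "{j. 2 * j \<le> n - 3} = {..<k - 1}"
    using n k by auto
  also have "(\<Sum>j<k - 1. (-1) ^ j * a (n - 3 - 2 * j)) = (\<Sum>j<k - 1. (-1) ^ j * a (2 * (k - 1 - 1 - j) + 1))"
    using n by (intro sum.cong refl arg_cong[where f="\<lambda>i. (-1) ^ _ * a i"]) auto
  finally have "a (2 * (k - 1) + 1) = c1 + (\<Sum>j<k - 1. (-1) ^ j * a (2 * (k - 1 - 1 - j) + 1))" .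
  then have "(\<Sum>j<k - 1 + 1. (-1) ^ j * a (2 * j + 1)) = (-1) ^ (k - 1) * c1"
    by (rule alternating_sum_recursion)
  then show "Im (form_at_i n a) = Im (Complex ((-1) ^ k * c2) ((-1) ^ (k + 1) * c1))"
    using k by (simp add: form_at_i_even(2)[OF n] power_diff)
qed

lemma form_at_i_constant_odd:
  fixes a :: "nat \<Rightarrow> real"
  assumes n: "n = 2 * k + 1" and k: "k \<ge> 1"
    and C1: "a (n - 1) = c1 + (\<Sum>j \<in> {j. 2 * j \<le> n - 3}. (-1) ^ j * a (n - 3 - 2 * j))"
    and C2: "a n = c2 + (\<Sum>j \<in> {j. 2 * j \<le> n - 2}. (-1) ^ j * a (n - 2 - 2 * j))"
  shows "form_at_i n a = Complex ((-1) ^ k * c1) ((-1) ^ k * c2)"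
proof (rule complex_eqI)
  have "{j. 2 * j \<le> n - 3} = {..<k}" using n k by auto
  moreover have "a (n - 3 - 2 * j) = a (2 * (k - 1 - j))" if "j < k" for j
    using n that by (intro arg_cong[where f=a]) linarith
  ultimately have "a (2 * k) = c1 + (\<Sum>j<k. (-1) ^ j * a (2 * (k - 1 - j)))"
    using C1 n by simp
  then have "(\<Sum>j<k + 1. (-1) ^ j * a (2 * j)) = (-1) ^ k * c1"
    by (rule alternating_sum_recursion[where f="\<lambda>j. a (2 * j)"])
  then show "Re (form_at_i n a) = Re (Complex ((-1) ^ k * c1) ((-1) ^ k * c2))"
    by (simp add: form_at_i_odd(1)[OF n])
  have "{j. 2 * j \<le> n - 2} = {..<k}" using n k by auto
  moreover have "a (n - 2 - 2 * j) = a (2 * (k - 1 - j) + 1)" if "j < k" for j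
    using n that by (intro arg_cong[where f=a]) linarith
  ultimately have "a (2 * k + 1) = c2 + (\<Sum>j<k. (-1) ^ j * a (2 * (k - 1 - j) + 1))"
    using C2 n by simp
  then have "(\<Sum>j<k + 1. (-1) ^ j * a (2 * j + 1)) = (-1) ^ k * c2"
    by (rule alternating_sum_recursion[where f="\<lambda>j. a (2 * j + 1)"])
  then show "Im (form_at_i n a) = Im (Complex ((-1) ^ k * c1) ((-1) ^ k * c2))"
    by (simp add: form_at_i_odd(2)[OF n])
qed

lemma conservation_laws_even:
  fixes n :: nat and \<Omega> :: "(real \<times> real) set"
    and \<Lambda> :: "real \<Rightarrow> real \<Rightarrow> real" and a :: "nat \<Rightarrow> real \<Rightarrow> real \<Rightarrow> real"
    and c1 c2 :: real
  assumes n: "n = 2 * k" and n3: "n \<ge> 3"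
    and op: "open \<Omega>"
    and Lpos: "\<forall>(x, y) \<in> \<Omega>. \<Lambda> x y > 0"
    and Lsm: "smooth_on \<Omega> \<Lambda>"
    and asm: "\<forall>i \<le> n. smooth_on \<Omega> (a i)"
    and PB: "\<forall>(x, y) \<in> \<Omega>. \<forall>p1 p2.
      poisson (\<lambda>x y p1 p2. (p1\<^sup>2 + p2\<^sup>2) / (2 * \<Lambda> x y))
              (\<lambda>x y p1 p2. \<Sum>i = 0..n. a i x y * p1 ^ (n - i) * p2 ^ i) x y p1 p2 = 0"
    and C1: "\<forall>(x, y) \<in> \<Omega>. a (n - 1) x y = c1 + (\<Sum>j \<in> {j. 2 * j \<le> n - 3}. (-1) ^ j * a (n - 3 - 2 * j) x y)"
    and C2: "\<forall>(x, y) \<in> \<Omega>. a n x y = c2 + (\<Sum>j \<in> {j. 2 * j \<le> n - 2}. (-1) ^ j * a (n - 2 - 2 * j) x y)"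
  shows "let Se = (\<lambda>x y. \<Sum>j = 0..k - 1. (-1) ^ j * real (n - 2 * j) * a (2 * j) x y);
             So = (\<lambda>x y. \<Sum>j = 0..k - 2. (-1) ^ j * real (n - 2 - 2 * j) * a (2 * j + 1) x y)
         in \<forall>(x, y) \<in> \<Omega>.
            pdx (\<lambda>x y. Se x y * \<Lambda> x y) x y
            + pdy (\<lambda>x y. (- So x y + (-1) ^ (k + 1) * real (n - 1) * c1) * \<Lambda> x y) x y = 0
          \<and> pdx (\<lambda>x y. (So x y + (-1) ^ (k + 1) * c1) * \<Lambda> x y) x y
            + pdy (\<lambda>x y. (Se x y + (-1) ^ (k + 1) * real n * c2) * \<Lambda> x y) x y = 0"
proof -
  have k: "k \<ge> 2" using n n3 by simp
  define \<alpha> \<beta> where "\<alpha> = (-1) ^ k * c2" and "\<beta> = (-1) ^ (k + 1) * c1"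
  define Se where "Se = (\<lambda>x y. \<Sum>j = 0..k - 1. (-1) ^ j * real (n - 2 * j) * a (2 * j) x y)"
  define So where "So = (\<lambda>x y. \<Sum>j = 0..k - 2. (-1) ^ j * real (n - 2 - 2 * j) * a (2 * j + 1) x y)"
  have const: "\<forall>(u, v) \<in> \<Omega>. form_at_i n (\<lambda>m. a m u v) = Complex \<alpha> \<beta>"
  proof (intro ballI, clarify)
    fix u v assume "(u, v) \<in> \<Omega>"
    with C1 C2 show "form_at_i n (\<lambda>m. a m u v) = Complex \<alpha> \<beta>"
      unfolding \<alpha>_def \<beta>_def by (intro form_at_i_constant_even[OF n k]) auto
  qed
  have Re_D: "Re (form_p1_at_i n (\<lambda>m. a m u v)) = Se u v" for u v
    unfolding Se_def by (rule form_p1_at_i_even(1)[OF n k])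
  have Im_D: "Im (form_p1_at_i n (\<lambda>m. a m u v)) = So u v + \<beta>" if "(u, v) \<in> \<Omega>" for u v
    using form_p1_at_i_even(2)[OF n k] const that by (auto simp: So_def)
  have first: "divergence (\<lambda>x y. Se x y * \<Lambda> x y)
                         (\<lambda>x y. (- So x y + (-1) ^ (k + 1) * real (n - 1) * c1) * \<Lambda> x y) x y = 0"
    if xy: "(x, y) \<in> \<Omega>" for x y
    using n3 by (intro divergence_free_cong_open[OF op xy conservation_law(1)[OF op xy Lpos Lsm asm PB const]])
      (simp_all add: Re_D Im_D \<beta>_def of_nat_diff algebra_simps)
  have second: "divergence (\<lambda>x y. (So x y + (-1) ^ (k + 1) * c1) * \<Lambda> x y)
                         (\<lambda>x y. (Se x y + (-1) ^ (k + 1) * real n * c2) * \<Lambda> x y) x y = 0"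
    if xy: "(x, y) \<in> \<Omega>" for x y
    by (intro divergence_free_cong_open[OF op xy conservation_law(2)[OF op xy Lpos Lsm asm PB const]])
      (simp_all add: Re_D Im_D \<alpha>_def \<beta>_def algebra_simps)
  show ?thesis
    unfolding Let_def using first second by (auto simp only: Se_def So_def divergence_def)
qed

lemma conservation_laws_odd:
  fixes n :: nat and \<Omega> :: "(real \<times> real) set"
    and \<Lambda> :: "real \<Rightarrow> real \<Rightarrow> real" and a :: "nat \<Rightarrow> real \<Rightarrow> real \<Rightarrow> real"
    and c1 c2 :: real
  assumes n: "n = 2 * k + 1" and n3: "n \<ge> 3"
    and op: "open \<Omega>"
    and Lpos: "\<forall>(x, y) \<in> \<Omega>. \<Lambda> x y > 0"
    and Lsm: "smooth_on \<Omega> \<Lambda>"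
    and asm: "\<forall>i \<le> n. smooth_on \<Omega> (a i)"
    and PB: "\<forall>(x, y) \<in> \<Omega>. \<forall>p1 p2.
      poisson (\<lambda>x y p1 p2. (p1\<^sup>2 + p2\<^sup>2) / (2 * \<Lambda> x y))
              (\<lambda>x y p1 p2. \<Sum>i = 0..n. a i x y * p1 ^ (n - i) * p2 ^ i) x y p1 p2 = 0"
    and C1: "\<forall>(x, y) \<in> \<Omega>. a (n - 1) x y = c1 + (\<Sum>j \<in> {j. 2 * j \<le> n - 3}. (-1) ^ j * a (n - 3 - 2 * j) x y)"
    and C2: "\<forall>(x, y) \<in> \<Omega>. a n x y = c2 + (\<Sum>j \<in> {j. 2 * j \<le> n - 2}. (-1) ^ j * a (n - 2 - 2 * j) x y)"
  shows "let Te = (\<lambda>x y. \<Sum>j = 0..k - 1. (-1) ^ j * real (n - 1 - 2 * j) * a (2 * j) x y);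
             To = (\<lambda>x y. \<Sum>j = 0..k - 1. (-1) ^ j * real (n - 1 - 2 * j) * a (2 * j + 1) x y)
         in \<forall>(x, y) \<in> \<Omega>.
            pdx (\<lambda>x y. (Te x y + (-1) ^ k * c1) * \<Lambda> x y) x y
            + pdy (\<lambda>x y. (- To x y + (-1) ^ k * real n * c2) * \<Lambda> x y) x y = 0
          \<and> pdx (\<lambda>x y. To x y * \<Lambda> x y) x y
            + pdy (\<lambda>x y. (Te x y + (-1) ^ (k + 1) * real (n - 1) * c1) * \<Lambda> x y) x y = 0"
proof -
  have k: "k \<ge> 1" using n n3 by simp
  define \<alpha> \<beta> where "\<alpha> = (-1) ^ k * c1" and "\<beta> = (-1) ^ k * c2"
  define Te where "Te = (\<lambda>x y. \<Sum>j = 0..k - 1. (-1) ^ j * real (n - 1 - 2 * j) * a (2 * j) x y)"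
  define To where "To = (\<lambda>x y. \<Sum>j = 0..k - 1. (-1) ^ j * real (n - 1 - 2 * j) * a (2 * j + 1) x y)"
  have const: "\<forall>(u, v) \<in> \<Omega>. form_at_i n (\<lambda>m. a m u v) = Complex \<alpha> \<beta>"
  proof (intro ballI, clarify)
    fix u v assume "(u, v) \<in> \<Omega>"
    with C1 C2 show "form_at_i n (\<lambda>m. a m u v) = Complex \<alpha> \<beta>"
      unfolding \<alpha>_def \<beta>_def by (intro form_at_i_constant_odd[OF n k]) auto
  qed
  have Re_D: "Re (form_p1_at_i n (\<lambda>m. a m u v)) = Te u v + \<alpha>" if "(u, v) \<in> \<Omega>" for u v
    using form_p1_at_i_odd(1)[OF n k] const that by (auto simp: Te_def)
  have Im_D: "Im (form_p1_at_i n (\<lambda>m. a m u v)) = To u v" for u v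
    unfolding To_def by (rule form_p1_at_i_odd(2)[OF n k])
  have first: "divergence (\<lambda>x y. (Te x y + (-1) ^ k * c1) * \<Lambda> x y)
                         (\<lambda>x y. (- To x y + (-1) ^ k * real n * c2) * \<Lambda> x y) x y = 0"
    if xy: "(x, y) \<in> \<Omega>" for x y
    by (intro divergence_free_cong_open[OF op xy conservation_law(1)[OF op xy Lpos Lsm asm PB const]])
      (simp_all add: Re_D Im_D \<alpha>_def \<beta>_def algebra_simps)
  have second: "divergence (\<lambda>x y. To x y * \<Lambda> x y)
                         (\<lambda>x y. (Te x y + (-1) ^ (k + 1) * real (n - 1) * c1) * \<Lambda> x y) x y = 0"
    if xy: "(x, y) \<in> \<Omega>" for x y
    using n3 by (intro divergence_free_cong_open[OF op xy conservation_law(2)[OF op xy Lpos Lsm asm PB const]])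
      (simp_all add: Re_D Im_D \<alpha>_def of_nat_diff algebra_simps)
  show ?thesis
    unfolding Let_def using first second by (auto simp only: Te_def To_def divergence_def)
qed

theorem lemma1:
  fixes n :: nat and \<Omega> :: "(real \<times> real) set"
    and \<Lambda> :: "real \<Rightarrow> real \<Rightarrow> real" and a :: "nat \<Rightarrow> real \<Rightarrow> real \<Rightarrow> real"
    and c1 c2 :: real
  assumes n3: "n \<ge> 3"
    and op: "open \<Omega>"
    and Lpos: "\<forall>(x, y) \<in> \<Omega>. \<Lambda> x y > 0"
    and Lsm: "smooth_on \<Omega> \<Lambda>"
    and asm: "\<forall>i \<le> n. smooth_on \<Omega> (a i)"
    and PB: "\<forall>(x, y) \<in> \<Omega>. \<forall>p1 p2.
      poisson (\<lambda>x y p1 p2. (p1\<^sup>2 + p2\<^sup>2) / (2 * \<Lambda> x y))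
              (\<lambda>x y p1 p2. \<Sum>i = 0..n. a i x y * p1 ^ (n - i) * p2 ^ i) x y p1 p2 = 0"
    and C1: "\<forall>(x, y) \<in> \<Omega>. a (n - 1) x y = c1 + (\<Sum>j \<in> {j. 2 * j \<le> n - 3}. (-1) ^ j * a (n - 3 - 2 * j) x y)"
    and C2: "\<forall>(x, y) \<in> \<Omega>. a n x y = c2 + (\<Sum>j \<in> {j. 2 * j \<le> n - 2}. (-1) ^ j * a (n - 2 - 2 * j) x y)"
  shows "(\<forall>k. n = 2 * k \<longrightarrow>
          (let Se = (\<lambda>x y. \<Sum>j = 0..k - 1. (-1) ^ j * real (n - 2 * j) * a (2 * j) x y);
               So = (\<lambda>x y. \<Sum>j = 0..k - 2. (-1) ^ j * real (n - 2 - 2 * j) * a (2 * j + 1) x y)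
           in \<forall>(x, y) \<in> \<Omega>.
              pdx (\<lambda>x y. Se x y * \<Lambda> x y) x y
              + pdy (\<lambda>x y. (- So x y + (-1) ^ (k + 1) * real (n - 1) * c1) * \<Lambda> x y) x y = 0
            \<and> pdx (\<lambda>x y. (So x y + (-1) ^ (k + 1) * c1) * \<Lambda> x y) x y
              + pdy (\<lambda>x y. (Se x y + (-1) ^ (k + 1) * real n * c2) * \<Lambda> x y) x y = 0))
    \<and> (\<forall>k. n = 2 * k + 1 \<longrightarrow>
          (let Te = (\<lambda>x y. \<Sum>j = 0..k - 1. (-1) ^ j * real (n - 1 - 2 * j) * a (2 * j) x y);
               To = (\<lambda>x y. \<Sum>j = 0..k - 1. (-1) ^ j * real (n - 1 - 2 * j) * a (2 * j + 1) x y)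
           in \<forall>(x, y) \<in> \<Omega>.
              pdx (\<lambda>x y. (Te x y + (-1) ^ k * c1) * \<Lambda> x y) x y
              + pdy (\<lambda>x y. (- To x y + (-1) ^ k * real n * c2) * \<Lambda> x y) x y = 0
            \<and> pdx (\<lambda>x y. To x y * \<Lambda> x y) x y
              + pdy (\<lambda>x y. (Te x y + (-1) ^ (k + 1) * real (n - 1) * c1) * \<Lambda> x y) x y = 0))"
  using conservation_laws_even[OF _ n3 op Lpos Lsm asm PB C1 C2]
        conservation_laws_odd[OF _ n3 op Lpos Lsm asm PB C1 C2]
  by blast

end
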